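(* Assume $D\le\tfrac12$. Let $\pi^*$ be the naive AM strategy with $\pi^*_m=\dfrac{e_m-d_m}{1-D}$ for every $m\in\mathcal M$ (the strategy called Undefended). Then the M strategy $\rho^*$ with $\rho^*_m=1$ for all $m\in\mathcal M$ (always attack) is a best response of M to $\pi^*$, and $u_{AM}(\pi^*,\rho^* )=D$. Moreover $u_{AM}(\pi,\rho)\le D$ for every AM strategy $\pi$ and every M strategy $\rho$; hence $(\pi^*,\rho^* )$ is an AM-optimal equilibrium among all AM strategies, in which AM protects every machine it defends.
   Context: Let $\mathcal M$ be a finite nonempty set of machine (environment) types. Let $e\in[0,1]^{\mathcal M}$ with $\sum_{r\in\mathcal M}e_r=1$ ($e_r$ is the fraction of all real machines that are of type $r$), and $d\in[0,1]^{\mathcal M}$ with $0\le d_r\le e_r$ ($d_r$ is the fraction of all real machines that are of type $r$ and defended by the anti-malware AM); put $D=\sum_{r}d_r$. An AM strategy $\pi$ assigns to each real machine type $r\in\mathcal M$ a vector $\pi^r\in[0,1]^{\mathcal M}$ with $\sum_{m}\pi^r_m\le 1$ ($\pi^r_m$ is the probability that AM creates a sandbox of type $m$ on a defended real machine of type $r$; with probability $1-\sum_m\pi^r_m$ no sandbox is created). AM's strategy is naive if $\pi^r$ does not depend on $r$; then we write $\pi_m$ for $\pi^r_m$. A malware (M) strategy is a vector $\rho\in[0,1]^{\mathcal M}$ ($\rho_m$ is the probability M attacks when it perceives environment $m$). The utilities are $$u_M(\pi,\rho)=\sum_{r\in\mathcal M}\Big[(e_r-d_r)\rho_r+d_r\Big(1-\sum_{m\in\mathcal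 M}\pi^r_m\rho_m\Big)\rho_r\Big],$$ $$u_{AM}(\pi,\rho)=\sum_{r\in\mathcal M}d_r\Big[\sum_{m\in\mathcal M}\big(\pi^r_m\rho_m+\pi^r_m(1-\rho_m)(1-\rho_r)\big)+\Big(1-\sum_{m\in\mathcal M}\pi^r_m\Big)(1-\rho_r)\Big].$$ A best response of M to $\pi$ is any $\rho\in\arg\max_{\hat\rho\in[0,1]^{\mathcal M}}u_M(\pi,\hat\rho)$. A pair $(\pi,\rho)$ with $\rho$ a best response to $\pi$ is an equilibrium; it is AM-optimal within a class of AM strategies if $\pi$ lies in the class and $u_{AM}(\pi,\rho)\ge u_{AM}(\pi',\rho')$ for every equilibrium $(\pi',\rho')$ with $\pi'$ in the class. *)

theory Defs
  imports Complex_Main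
begin

text \<open>An AM strategy is pi :: 'm => 'm => real, with pi r m the probability of creating
  a sandbox of type m on a defended real machine of type r.\<close>

definition am_strategy :: "('m::finite \<Rightarrow> 'm \<Rightarrow> real) \<Rightarrow> bool" where
  "am_strategy \<pi> \<longleftrightarrow> (\<forall>r m. 0 \<le> \<pi> r m \<and> \<pi> r m \<le> 1) \<and> (\<forall>r. (\<Sum>m\<in>UNIV. \<pi> r m) \<le> 1)"

definition naive :: "('m::finite \<Rightarrow> 'm \<Rightarrow> real) \<Rightarrow> bool" where
  "naive \<pi> \<longleftrightarrow> (\<forall>r r'. \<pi> r = \<pi> r')"

definition m_strategy :: "('m::finite \<Rightarrow> real) \<Rightarrow> bool" where
  "m_strategy \<rho> \<longleftrightarrow> (\<forall>m. 0 \<le> \<rho> m \<and> \<rho> m \<le> 1)"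

definition u_M :: "('m::finite \<Rightarrow> real) \<Rightarrow> ('m \<Rightarrow> real) \<Rightarrow> ('m \<Rightarrow> 'm \<Rightarrow> real) \<Rightarrow> ('m \<Rightarrow> real) \<Rightarrow> real" where
  "u_M e d \<pi> \<rho> = (\<Sum>r\<in>UNIV. (e r - d r) * \<rho> r + d r * (1 - (\<Sum>m\<in>UNIV. \<pi> r m * \<rho> m)) * \<rho> r)"

definition u_AM :: "('m::finite \<Rightarrow> real) \<Rightarrow> ('m \<Rightarrow> 'm \<Rightarrow> real) \<Rightarrow> ('m \<Rightarrow> real) \<Rightarrow> real" where
  "u_AM d \<pi> \<rho> = (\<Sum>r\<in>UNIV. d r * ((\<Sum>m\<in>UNIV. \<pi> r m * \<rho> m + \<pi> r m * (1 - \<rho> m) * (1 - \<rho> r))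
                                     + (1 - (\<Sum>m\<in>UNIV. \<pi> r m)) * (1 - \<rho> r)))"

definition best_response :: "('m::finite \<Rightarrow> real) \<Rightarrow> ('m \<Rightarrow> real) \<Rightarrow> ('m \<Rightarrow> 'm \<Rightarrow> real) \<Rightarrow> ('m \<Rightarrow> real) \<Rightarrow> bool" where
  "best_response e d \<pi> \<rho> \<longleftrightarrow> m_strategy \<rho> \<and> (\<forall>\<rho>'. m_strategy \<rho>' \<longrightarrow> u_M e d \<pi> \<rho>' \<le> u_M e d \<pi> \<rho>)"

definition equilibrium :: "('m::finite \<Rightarrow> real) \<Rightarrow> ('m \<Rightarrow> real) \<Rightarrow> ('m \<Rightarrow> 'm \<Rightarrow> real) \<Rightarrow> ('m \<Rightarrow> real) \<Rightarrow> bool" where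
  "equilibrium e d \<pi> \<rho> \<longleftrightarrow> best_response e d \<pi> \<rho>"

definition am_optimal :: "(('m::finite \<Rightarrow> 'm \<Rightarrow> real) \<Rightarrow> bool) \<Rightarrow> ('m \<Rightarrow> real) \<Rightarrow> ('m \<Rightarrow> real) \<Rightarrow> ('m \<Rightarrow> 'm \<Rightarrow> real) \<Rightarrow> ('m \<Rightarrow> real) \<Rightarrow> bool" where
  "am_optimal C e d \<pi> \<rho> \<longleftrightarrow> equilibrium e d \<pi> \<rho> \<and> C \<pi> \<and>
     (\<forall>\<pi>' \<rho>'. C \<pi>' \<and> equilibrium e d \<pi>' \<rho>' \<longrightarrow> u_AM d \<pi>' \<rho>' \<le> u_AM d \<pi> \<rho>)"

end

theory Submission
  imports Defs
begin

text \<open>Whatever AM does, a defended machine contributes at most its mass d r to AM's utility,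
  so u_AM is bounded by the defended mass D. The Undefended strategy makes every row of
  sandbox probabilities sum to 1; against always-attack a sandbox is then always created and
  the attack always caught, so AM attains D. For M, a naive AM strategy decouples its utility
  into (1 - D) S + D (1 - S) at best, where S is the probability of attacking inside a
  sandbox; when D \<le> 1/2 this is at most 1 - D, the payoff of always attacking.\<close>

lemma protection_le_1:
  fixes p \<rho> :: "'m::finite \<Rightarrow> real"
  assumes p_nonneg: "\<forall>m. 0 \<le> p m" and p_sum: "(\<Sum>m\<in>UNIV. p m) \<le> 1"
    and \<rho>: "m_strategy \<rho>"
  shows "(\<Sum>m\<in>UNIV. p m * \<rho> m + p m * (1 - \<rho> m) * (1 - \<rho> r))
          + (1 - (\<Sum>m\<in>UNIV. p m)) * (1 - \<rho> r) \<le> 1"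
proof -
  have \<rho>_r: "0 \<le> \<rho> r" "\<rho> r \<le> 1" using \<rho> by (auto simp: m_strategy_def)
  have "(\<Sum>m\<in>UNIV. p m * \<rho> m + p m * (1 - \<rho> m) * (1 - \<rho> r)) \<le> (\<Sum>m\<in>UNIV. p m)"
  proof (rule sum_mono)
    fix m
    have "0 \<le> \<rho> m" "\<rho> m \<le> 1" using \<rho> by (auto simp: m_strategy_def)
    then have "p m * (1 - \<rho> m) * (1 - \<rho> r) \<le> p m * (1 - \<rho> m)"
      using p_nonneg \<rho>_r by (intro mult_left_le) auto
    then show "p m * \<rho> m + p m * (1 - \<rho> m) * (1 - \<rho> r) \<le> p m"
      by (simp add: algebra_simps)
  qed
  moreover have "(1 - (\<Sum>m\<in>UNIV. p m)) * (1 - \<rho> r) \<le> 1 - (\<Sum>m\<in>UNIV. p m)"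
    using p_sum \<rho>_r by (intro mult_left_le) auto
  ultimately show ?thesis by linarith
qed

lemma u_AM_le_defended_mass:
  assumes d_nonneg: "\<forall>r. 0 \<le> (d::'m::finite \<Rightarrow> real) r"
    and \<pi>: "am_strategy \<pi>" and \<rho>: "m_strategy \<rho>"
  shows "u_AM d \<pi> \<rho> \<le> (\<Sum>r\<in>UNIV. d r)"
  unfolding u_AM_def
proof (rule sum_mono)
  fix r
  have "(\<Sum>m\<in>UNIV. \<pi> r m * \<rho> m + \<pi> r m * (1 - \<rho> m) * (1 - \<rho> r))
          + (1 - (\<Sum>m\<in>UNIV. \<pi> r m)) * (1 - \<rho> r) \<le> 1"
    using \<pi> \<rho> by (intro protection_le_1) (auto simp: am_strategy_def)
  then show "d r * ((\<Sum>m\<in>UNIV. \<pi> r m * \<rho> m + \<pi> r m * (1 - \<rho> m) * (1 - \<rho> r))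
          + (1 - (\<Sum>m\<in>UNIV. \<pi> r m)) * (1 - \<rho> r)) \<le> d r"
    using d_nonneg mult_left_le by blast
qed

lemma u_AM_always_attack:
  "u_AM d \<pi> (\<lambda>_. 1) = (\<Sum>r\<in>UNIV. d r * (\<Sum>m\<in>UNIV. \<pi> r m))"
  by (simp add: u_AM_def)

lemma u_M_always_attack:
  "u_M e d \<pi> (\<lambda>_. 1) = (\<Sum>r\<in>UNIV. e r - d r * (\<Sum>m\<in>UNIV. \<pi> r m))"
  by (simp add: u_M_def algebra_simps)

lemma u_M_naive:
  fixes p :: "'m::finite \<Rightarrow> real"
  shows "u_M e d (\<lambda>_. p) \<rho> =
    (\<Sum>r\<in>UNIV. (e r - d r) * \<rho> r) + (\<Sum>r\<in>UNIV. d r * \<rho> r) * (1 - (\<Sum>m\<in>UNIV. p m * \<rho> m))"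
proof -
  let ?S = "\<Sum>m\<in>UNIV. p m * \<rho> m"
  have "u_M e d (\<lambda>_. p) \<rho> = (\<Sum>r\<in>UNIV. (e r - d r) * \<rho> r + d r * \<rho> r * (1 - ?S))"
    by (simp add: u_M_def algebra_simps)
  then show ?thesis by (simp add: sum.distrib sum_distrib_right)
qed

lemma am_optimal_if_attains_bound:
  assumes br: "best_response e d \<pi> \<rho>" and \<pi>: "C \<pi>"
    and bound: "\<forall>\<pi>' \<rho>'. C \<pi>' \<and> m_strategy \<rho>' \<longrightarrow> u_AM d \<pi>' \<rho>' \<le> u_AM d \<pi> \<rho>"
  shows "am_optimal C e d \<pi> \<rho>"
  using assms by (auto simp: am_optimal_def equilibrium_def best_response_def)

definition undefended :: "('m::finite \<Rightarrow> real) \<Rightarrow> ('m \<Rightarrow> real) \<Rightarrow> 'm \<Rightarrow> 'm \<Rightarrow> real" where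
  "undefended e d = (\<lambda>r m. (e m - d m) / (1 - (\<Sum>r\<in>UNIV. d r)))"

locale machine_distribution =
  fixes e d :: "'m::finite \<Rightarrow> real"
  assumes e_sum: "(\<Sum>r\<in>UNIV. e r) = 1"
    and d_range: "\<forall>r. 0 \<le> d r \<and> d r \<le> e r"
    and defended_lt_1: "(\<Sum>r\<in>UNIV. d r) < 1"
begin

lemma undefended_mass: "(\<Sum>m\<in>UNIV. e m - d m) = 1 - (\<Sum>r\<in>UNIV. d r)"
  using e_sum by (simp add: sum_subtractf)

lemma sum_undefended: "(\<Sum>m\<in>UNIV. undefended e d r m) = 1"
  using defended_lt_1 undefended_mass by (simp add: undefended_def flip: sum_divide_distrib)

lemma am_strategy_undefended: "am_strategy (undefended e d)"
proof -
  have "e m - d m \<le> (\<Sum>m\<in>UNIV. e m - d m)" for m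
    using d_range by (intro member_le_sum) auto
  then show ?thesis
    using sum_undefended d_range defended_lt_1
    by (auto simp: am_strategy_def undefended_def undefended_mass)
qed

lemma u_M_undefended_le:
  assumes D_le: "(\<Sum>r\<in>UNIV. d r) \<le> 1/2" and \<rho>: "m_strategy \<rho>"
  shows "u_M e d (undefended e d) \<rho> \<le> 1 - (\<Sum>r\<in>UNIV. d r)"
proof -
  let ?D = "\<Sum>r\<in>UNIV. d r"
  define p where "p = undefended e d undefined"
  define S where "S = (\<Sum>m\<in>UNIV. p m * \<rho> m)"
  have naive_form: "undefended e d = (\<lambda>_. p)" by (simp add: p_def undefended_def)
  have \<rho>_range: "0 \<le> \<rho> m" "\<rho> m \<le> 1" for m using \<rho> by (auto simp: m_strategy_def)
  have p_range: "0 \<le> p m" "(\<Sum>m\<in>UNIV. p m) = 1" for m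
    using am_strategy_undefended sum_undefended by (auto simp: p_def am_strategy_def)
  have S_range: "0 \<le> S" "S \<le> 1"
  proof -
    show "0 \<le> S" unfolding S_def using p_range \<rho>_range by (intro sum_nonneg) auto
    have "S \<le> (\<Sum>m\<in>UNIV. p m)" unfolding S_def
      using p_range \<rho>_range by (intro sum_mono mult_right_le_one_le) auto
    then show "S \<le> 1" using p_range by simp
  qed
  have undefended_part: "(\<Sum>m\<in>UNIV. (e m - d m) * \<rho> m) = (1 - ?D) * S"
    using defended_lt_1 by (simp add: S_def p_def undefended_def sum_distrib_left)
  have defended_part: "(\<Sum>r\<in>UNIV. d r * \<rho> r) \<le> ?D"
    using d_range \<rho>_range by (intro sum_mono mult_right_le_one_le) auto
  have "u_M e d (undefended e d) \<rho> \<le> (1 - ?D) * S + ?D * (1 - S)"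
    unfolding naive_form u_M_naive S_def[symmetric] undefended_part
    using defended_part S_range by (simp add: mult_right_mono)
  also have "\<dots> \<le> (1 - ?D) * S + (1 - ?D) * (1 - S)"
    using D_le S_range by (intro add_left_mono mult_right_mono) auto
  finally show ?thesis by (simp add: algebra_simps)
qed

lemma best_response_undefended_always_attack:
  assumes "(\<Sum>r\<in>UNIV. d r) \<le> 1/2"
  shows "best_response e d (undefended e d) (\<lambda>_. 1)"
  using u_M_undefended_le[OF assms]
  by (simp add: best_response_def m_strategy_def u_M_always_attack sum_undefended undefended_mass)

end

theorem theorem3:
  fixes e d :: "'m::finite \<Rightarrow> real"
  assumes e_range: "\<forall>r. 0 \<le> e r \<and> e r \<le> 1"
    and e_sum: "(\<Sum>r\<in>UNIV. e r) = 1"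
    and d_range: "\<forall>r. 0 \<le> d r \<and> d r \<le> e r"
    and D_le: "(\<Sum>r\<in>UNIV. d r) \<le> 1/2"
  defines "D \<equiv> (\<Sum>r\<in>UNIV. d r)"
    and "\<pi>s \<equiv> (\<lambda>(r::'m) m. (e m - d m) / (1 - (\<Sum>r\<in>UNIV. d r)))"
    and "\<rho>s \<equiv> (\<lambda>(m::'m). 1::real)"
  shows "am_strategy \<pi>s \<and> naive \<pi>s
    \<and> best_response e d \<pi>s \<rho>s
    \<and> u_AM d \<pi>s \<rho>s = D
    \<and> (\<forall>\<pi> \<rho>. am_strategy \<pi> \<and> m_strategy \<rho> \<longrightarrow> u_AM d \<pi> \<rho> \<le> D)
    \<and> am_optimal am_strategy e d \<pi>s \<rho>s"
proof -
  interpret machine_distribution e d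
    using e_sum d_range D_le by unfold_locales auto
  have \<pi>s: "\<pi>s = undefended e d" by (simp add: \<pi>s_def undefended_def)
  have am: "am_strategy \<pi>s" by (simp add: \<pi>s am_strategy_undefended)
  have nv: "naive \<pi>s" by (simp add: naive_def \<pi>s_def)
  have br: "best_response e d \<pi>s \<rho>s"
    unfolding \<pi>s \<rho>s_def using D_le by (rule best_response_undefended_always_attack)
  have attained: "u_AM d \<pi>s \<rho>s = D"
    by (simp add: \<pi>s \<rho>s_def u_AM_always_attack sum_undefended D_def)
  have bound: "\<forall>\<pi> \<rho>. am_strategy \<pi> \<and> m_strategy \<rho> \<longrightarrow> u_AM d \<pi> \<rho> \<le> D"
    using u_AM_le_defended_mass d_range unfolding D_def by blast
  have "am_optimal am_strategy e d \<pi>s \<rho>s"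
    using br am bound by (intro am_optimal_if_attains_bound) (simp_all add: attained)
  with am nv br attained bound show ?thesis by blast
qed

end
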